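(* Let $N_o>0$, $\alpha>0$, $\beta>0$ and $\eta(d)=\frac{1}{(1+d)^\alpha}$. If $C,D>0$ satisfy $$(1+C)^\alpha\sum_{k=1}^{\infty}\frac{6k+3}{(1+kC(1+D/2))^\alpha}<\frac1\beta,$$ then $(C,D)$ ensures the SINR$_\beta$ criterion under this propagation model.
   Context: $\mathrm{SINR}(t,r,T,P,N_o,\eta)=\dfrac{P\eta(\|t-r\|)}{N_o+\sum_{t'\in T}P\eta(\|t'-r\|)}$ for $t,r\in\mathbb{R}^2$, $T$ a finite subset of $\mathbb{R}^2$, $P>0$. $(t,r,T)$ satisfies DC$(C,D)$ if $\|t-r\|\le C$ and $\|t'-t''\|\ge C(2+D)$ for all distinct $t',t''\in T\cup\{t\}$. The pair $(C,D)$ ensures the SINR$_\beta$ criterion (given $N_o$ and $\eta$) if there exists $P>0$ such that every triple $(t,r,T)$ satisfying DC$(C,D)$ has $\mathrm{SINR}(t,r,T,P,N_o,\eta)\ge\beta$. *)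

theory Defs
  imports "HOL-Analysis.Analysis"
begin

type_synonym point = "real ^ 2"

definition SINR :: "point \<Rightarrow> point \<Rightarrow> point set \<Rightarrow> real \<Rightarrow> real \<Rightarrow> (real \<Rightarrow> real) \<Rightarrow> real" where
  "SINR t r T P No \<eta> =
     P * \<eta> (norm (t - r)) / (No + (\<Sum>t'\<in>T. P * \<eta> (norm (t' - r))))"

definition DC :: "real \<Rightarrow> real \<Rightarrow> point \<Rightarrow> point \<Rightarrow> point set \<Rightarrow> bool" where
  "DC C D t r T \<longleftrightarrow> norm (t - r) \<le> C \<and>
     (\<forall>t1\<in>T \<union> {t}. \<forall>t2\<in>T \<union> {t}. t1 \<noteq> t2 \<longrightarrow> norm (t1 - t2) \<ge> C * (2 + D))"

definition ensures_SINR :: "real \<Rightarrow> real \<Rightarrow> real \<Rightarrow> real \<Rightarrow> (real \<Rightarrow> real) \<Rightarrow> bool" where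
  "ensures_SINR \<beta> C D No \<eta> \<longleftrightarrow>
     (\<exists>P>0. \<forall>t r T. finite T \<longrightarrow> t \<notin> T \<longrightarrow> DC C D t r T \<longrightarrow> SINR t r T P No \<eta> \<ge> \<beta>)"

end

theory Submission
  imports Defs
begin

text \<open>
  Let \<open>R = C (1 + D/2)\<close>. Every interferer is at distance
  at least \<open>R\<close> from \<open>r\<close>, and interferers are pairwise \<open>2R\<close> apart, so the open \<open>R\<close>-balls around
  them are disjoint. Those interferers at distance in \<open>[kR, (k+1)R)\<close> have their balls inside the
  annulus of radii \<open>(k-1)R\<close> and \<open>(k+2)R\<close>, so comparing areas there are at most
  \<open>(k+2)\<^sup>2 - (k-1)\<^sup>2 = 6k+3\<close> of them, each contributing at most \<open>1/(1+kR)\<^sup>\<alpha>\<close>. Hence the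
  interference is bounded by the series \<open>S\<close> of the hypothesis, while the signal is at least
  \<open>1/(1+C)\<^sup>\<alpha>\<close>. Since \<open>\<beta>(1+C)\<^sup>\<alpha>S < 1\<close>, a large enough power \<open>P\<close> swamps the noise.
\<close>

lemma fmeasurable_ball_lborel: "ball (c::'a::euclidean_space) e \<in> fmeasurable lborel"
proof -
  have "emeasure lborel (ball c e) \<le> emeasure lborel (cball c e)"
    by (rule emeasure_mono) auto
  also have "\<dots> < \<infinity>"
    using fmeasurable_compact[of "cball c e"] by (auto simp: fmeasurable_def)
  finally show ?thesis by (simp add: fmeasurable_def)
qed

lemma card_separated_points_in_annulus:
  fixes S :: "'a::euclidean_space set" and r :: 'a and R :: real and k :: nat
  assumes "finite S" "R > 0" "k \<ge> 1"
    and sep: "\<And>a b. a \<in> S \<Longrightarrow> b \<in> S \<Longrightarrow> a \<noteq> b \<Longrightarrow> 2 * R \<le> norm (a - b)"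
    and annulus: "\<And>a. a \<in> S \<Longrightarrow> k * R \<le> norm (a - r) \<and> norm (a - r) < (k + 1) * R"
  shows "real (card S) \<le> (real k + 2) ^ DIM('a) - (real k - 1) ^ DIM('a)"
proof -
  define n where "n = DIM('a)"
  define V where "V = unit_ball_vol (real n)"
  have "V > 0" unfolding V_def by simp
  have disjoint: "pairwise (\<lambda>a b. disjnt (ball a R) (ball b R)) S"
    unfolding pairwise_def disjnt_def
  proof (intro ballI impI equals0I)
    fix a b x assume ab: "a \<in> S" "b \<in> S" "a \<noteq> b" and "x \<in> ball a R \<inter> ball b R"
    then have "norm (a - b) < 2 * R"
      using dist_triangle[of a b x] by (simp add: dist_norm norm_minus_commute[of x b])
    then show False using sep[OF ab] by simp
  qed
  have inside: "(\<Union>a\<in>S. ball a R) \<subseteq> ball r ((k + 2) * R) - cball r ((k - 1) * R)"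
  proof
    fix x assume "x \<in> (\<Union>a\<in>S. ball a R)"
    then obtain a where a: "a \<in> S" "dist a x < R" by auto
    then show "x \<in> ball r ((k + 2) * R) - cball r ((k - 1) * R)"
      using annulus[OF a(1)] dist_triangle[of r x a] dist_triangle[of r a x] \<open>k \<ge> 1\<close>
      by (auto simp: dist_norm norm_minus_commute algebra_simps of_nat_diff)
  qed
  have "card S * (V * R ^ n) = measure lborel (\<Union>a\<in>S. ball a R)"
    using measure_UNION'[OF \<open>finite S\<close> fmeasurable_ball_lborel disjoint] \<open>R > 0\<close>
    by (simp add: content_ball V_def n_def)
  also have "\<dots> \<le> measure lborel (ball r ((k + 2) * R) - cball r ((k - 1) * R))"
    by (rule measure_mono_fmeasurable[OF inside])
       (auto intro!: fmeasurable_Diff fmeasurable_ball_lborel borel_open open_UN)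
  also have "\<dots> = V * ((k + 2) * R) ^ n - V * ((k - 1) * R) ^ n"
  proof -
    have "cball r ((k - 1) * R) \<subseteq> ball r ((k + 2) * R)"
      using \<open>R > 0\<close> \<open>k \<ge> 1\<close> by (auto simp: of_nat_diff algebra_simps)
    moreover have "0 \<le> (k + 2) * R" "0 \<le> (k - 1) * R"
      using \<open>R > 0\<close> by simp_all
    ultimately show ?thesis
      using fmeasurable_ball_lborel[of r "(k + 2) * R"]
      by (subst measure_Diff) (auto simp: fmeasurable_def content_ball content_cball V_def n_def)
  qed
  also have "\<dots> = ((real k + 2) ^ n - (real k - 1) ^ n) * (V * R ^ n)"
    using \<open>k \<ge> 1\<close> by (simp add: of_nat_diff power_mult_distrib) (simp add: algebra_simps)
  finally show ?thesis
    using \<open>V > 0\<close> \<open>R > 0\<close> by (simp add: n_def)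
qed

corollary card_separated_points_in_planar_annulus:
  fixes S :: "point set" and r :: point and R :: real and k :: nat
  assumes "finite S" "R > 0" "k \<ge> 1"
    and "\<And>a b. a \<in> S \<Longrightarrow> b \<in> S \<Longrightarrow> a \<noteq> b \<Longrightarrow> 2 * R \<le> norm (a - b)"
    and "\<And>a. a \<in> S \<Longrightarrow> k * R \<le> norm (a - r) \<and> norm (a - r) < (k + 1) * R"
  shows "real (card S) \<le> 6 * k + 3"
  using card_separated_points_in_annulus[OF assms] by (simp add: power2_eq_square algebra_simps)

lemma floor_annulus_index:
  fixes d R :: real
  assumes "R > 0" "R \<le> d"
  shows "real (nat \<lfloor>d / R\<rfloor> - 1 + 1) * R \<le> d \<and> d < real (nat \<lfloor>d / R\<rfloor> - 1 + 2) * R"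
proof -
  define j where "j = nat \<lfloor>d / R\<rfloor> - 1"
  have "1 \<le> d / R" using assms by simp
  then have j1: "real (j + 1) = of_int \<lfloor>d / R\<rfloor>" and j2: "real (j + 2) = of_int \<lfloor>d / R\<rfloor> + 1"
    unfolding j_def by (simp_all add: of_nat_diff)
  have "of_int \<lfloor>d / R\<rfloor> \<le> d / R" "d / R < of_int \<lfloor>d / R\<rfloor> + 1"
    by linarith+
  then have "of_int \<lfloor>d / R\<rfloor> * R \<le> d" "d < (of_int \<lfloor>d / R\<rfloor> + 1) * R"
    using \<open>R > 0\<close> by (metis pos_le_divide_eq, metis pos_divide_less_eq)
  then show ?thesis
    unfolding j_def[symmetric] j1 j2 by blast
qed

lemma sum_le_suminf_by_fibres:
  fixes f :: "'a \<Rightarrow> real" and \<phi> :: "'a \<Rightarrow> nat" and c h :: "nat \<Rightarrow> real"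
  assumes "finite T"
    and bound: "\<And>x. x \<in> T \<Longrightarrow> f x \<le> h (\<phi> x)"
    and h_nonneg: "\<And>j. 0 \<le> h j"
    and card_fibre: "\<And>j. real (card {x\<in>T. \<phi> x = j}) \<le> c j"
    and "summable (\<lambda>j. c j * h j)"
  shows "(\<Sum>x\<in>T. f x) \<le> (\<Sum>j. c j * h j)"
proof -
  have term_nonneg: "0 \<le> c j * h j" for j
    using card_fibre[of j] h_nonneg[of j] by (simp add: order_trans[OF of_nat_0_le_iff])
  have "(\<Sum>x\<in>T. f x) \<le> (\<Sum>x\<in>T. h (\<phi> x))"
    by (rule sum_mono) (rule bound)
  also have "\<dots> = (\<Sum>j\<in>\<phi> ` T. \<Sum>x\<in>{x\<in>T. \<phi> x = j}. h (\<phi> x))"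
    by (rule sum.image_gen[OF \<open>finite T\<close>])
  also have "\<dots> = (\<Sum>j\<in>\<phi> ` T. real (card {x\<in>T. \<phi> x = j}) * h j)"
    by (intro sum.cong refl) simp
  also have "\<dots> \<le> (\<Sum>j\<in>\<phi> ` T. c j * h j)"
    by (intro sum_mono mult_right_mono card_fibre h_nonneg)
  also have "\<dots> \<le> (\<Sum>j. c j * h j)"
    using \<open>finite T\<close> term_nonneg by (intro sum_le_suminf \<open>summable _\<close>) auto
  finally show ?thesis .
qed

lemma inverse_one_plus_powr_antimono:
  fixes a b \<alpha> :: real
  assumes "0 \<le> a" "a \<le> b" "0 \<le> \<alpha>"
  shows "1 / (1 + b) powr \<alpha> \<le> 1 / (1 + a) powr \<alpha>"
  using assms by (intro divide_left_mono powr_mono2 mult_pos_pos) auto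

lemma DC_interferer_far:
  assumes "DC C D t r T" "t \<notin> T" "x \<in> T" "C \<ge> 0" "D \<ge> 0"
  shows "C * (1 + D / 2) \<le> norm (x - r)"
proof -
  have "C * (2 + D) \<le> norm (x - t)"
    using assms(1-3) unfolding DC_def by (metis UnCI insertI1)
  also have "\<dots> \<le> norm (x - r) + norm (t - r)"
    using norm_triangle_ineq4[of "x - r" "t - r"] by simp
  also have "norm (t - r) \<le> C"
    using assms(1) unfolding DC_def by simp
  finally show ?thesis
    using mult_nonneg_nonneg[OF assms(4,5)] by (simp add: algebra_simps)
qed

lemma DC_interferers_separated:
  assumes "DC C D t r T" "a \<in> T" "b \<in> T" "a \<noteq> b"
  shows "2 * (C * (1 + D / 2)) \<le> norm (a - b)"
  using assms unfolding DC_def by (auto simp: algebra_simps)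

lemma DC_interference_le_series:
  fixes C D \<alpha> :: real and t r :: point and T :: "point set"
  assumes "finite T" "t \<notin> T" "DC C D t r T" "C > 0" "D > 0" "\<alpha> > 0"
    and summable: "summable (\<lambda>k::nat. (6 * real (k+1) + 3) / (1 + real (k+1) * C * (1 + D / 2)) powr \<alpha>)"
  shows "(\<Sum>t'\<in>T. 1 / (1 + norm (t' - r)) powr \<alpha>)
    \<le> (\<Sum>k. (6 * real (k+1) + 3) / (1 + real (k+1) * C * (1 + D / 2)) powr \<alpha>)"
proof -
  define R where "R = C * (1 + D / 2)"
  have "R > 0" unfolding R_def using assms(4,5) by simp
  define ring :: "point \<Rightarrow> nat" where "ring x = nat \<lfloor>norm (x - r) / R\<rfloor> - 1" for x
  have far: "R \<le> norm (x - r)" if "x \<in> T" for x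
    unfolding R_def using DC_interferer_far[OF assms(3,2) that] assms(4,5) by simp
  have in_ring: "real (ring x + 1) * R \<le> norm (x - r) \<and> norm (x - r) < real (ring x + 2) * R"
    if "x \<in> T" for x
    unfolding ring_def using floor_annulus_index[OF \<open>R > 0\<close> far[OF that]] .
  have "(\<Sum>t'\<in>T. 1 / (1 + norm (t' - r)) powr \<alpha>)
    \<le> (\<Sum>j. (6 * real (j+1) + 3) * (1 / (1 + real (j+1) * R) powr \<alpha>))"
  proof (rule sum_le_suminf_by_fibres[where \<phi> = ring])
    show "1 / (1 + norm (x - r)) powr \<alpha> \<le> 1 / (1 + real (ring x + 1) * R) powr \<alpha>" if "x \<in> T" for x
      using in_ring[OF that] \<open>R > 0\<close> assms(6) by (intro inverse_one_plus_powr_antimono) auto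
    show "real (card {x\<in>T. ring x = j}) \<le> 6 * real (j+1) + 3" for j
      using card_separated_points_in_planar_annulus[of "{x\<in>T. ring x = j}" R "j + 1" r]
        DC_interferers_separated[OF assms(3)] in_ring \<open>finite T\<close> \<open>R > 0\<close>
      by (auto simp: R_def)
    show "summable (\<lambda>j. (6 * real (j+1) + 3) * (1 / (1 + real (j+1) * R) powr \<alpha>))"
      using summable by (simp add: R_def mult.assoc)
  qed (use \<open>finite T\<close> in auto)
  then show ?thesis
    by (simp add: R_def mult.assoc)
qed

lemma power_overcoming_bounded_interference:
  fixes No \<beta> A S :: real
  assumes "No > 0" "\<beta> > 0" "A > 0" "S \<ge> 0" "\<beta> * A * S < 1"
  shows "\<exists>P>0. \<forall>I e. 0 \<le> I \<longrightarrow> I \<le> S \<longrightarrow> 1 / A \<le> e \<longrightarrow> \<beta> \<le> P * e / (No + P * I)"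
proof (intro exI conjI allI impI)
  define P where "P = \<beta> * A * No / (1 - \<beta> * A * S)"
  show "P > 0"
    unfolding P_def using assms by simp
  have balance: "\<beta> * No + \<beta> * P * S = P / A"
  proof -
    have "P * (1 - \<beta> * A * S) = \<beta> * A * No"
      unfolding P_def using assms(5) by simp
    then show ?thesis using assms(3) by (simp add: field_simps)
  qed
  fix I e :: real assume "0 \<le> I" "I \<le> S" "1 / A \<le> e"
  have "\<beta> * (No + P * I) \<le> \<beta> * No + \<beta> * P * S"
    using \<open>I \<le> S\<close> \<open>P > 0\<close> assms(2) by (simp add: algebra_simps)
  also have "\<dots> \<le> P * e"
    using balance \<open>1 / A \<le> e\<close> \<open>P > 0\<close> mult_left_mono[of "1 / A" e P] by simp
  finally show "\<beta> \<le> P * e / (No + P * I)"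
    using \<open>0 \<le> I\<close> \<open>P > 0\<close> assms(1) by (simp add: pos_le_divide_eq add_pos_nonneg)
qed

theorem corollary1:
  fixes No \<alpha> \<beta> C D :: real
  assumes "No > 0" "\<alpha> > 0" "\<beta> > 0" "C > 0" "D > 0"
    and "summable (\<lambda>k::nat. (6 * real (k+1) + 3) / (1 + real (k+1) * C * (1 + D / 2)) powr \<alpha>)"
    and "(1 + C) powr \<alpha> * (\<Sum>k. (6 * real (k+1) + 3) / (1 + real (k+1) * C * (1 + D / 2)) powr \<alpha>) < 1 / \<beta>"
  shows "ensures_SINR \<beta> C D No (\<lambda>d. 1 / (1 + d) powr \<alpha>)"
proof -
  define S where "S = (\<Sum>k. (6 * real (k+1) + 3) / (1 + real (k+1) * C * (1 + D / 2)) powr \<alpha>)"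
  have "S \<ge> 0"
    unfolding S_def using assms(6) by (intro suminf_nonneg) auto
  have "\<beta> * (1 + C) powr \<alpha> * S < 1"
    using assms(3,7) unfolding S_def by (simp add: field_simps)
  then obtain P where "P > 0" and P: "\<And>I e. 0 \<le> I \<Longrightarrow> I \<le> S \<Longrightarrow> 1 / (1 + C) powr \<alpha> \<le> e \<Longrightarrow>
      \<beta> \<le> P * e / (No + P * I)"
    using power_overcoming_bounded_interference[OF assms(1,3) _ \<open>S \<ge> 0\<close>, of "(1 + C) powr \<alpha>"]
      assms(4) by auto
  show ?thesis
    unfolding ensures_SINR_def
  proof (intro exI[of _ P] conjI \<open>P > 0\<close> allI impI)
    fix t r :: point and T assume "finite T" "t \<notin> T" "DC C D t r T"
    have "\<beta> \<le> P * (1 / (1 + norm (t - r)) powr \<alpha>) / (No + P * (\<Sum>t'\<in>T. 1 / (1 + norm (t' - r)) powr \<alpha>))"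
    proof (rule P)
      show "(\<Sum>t'\<in>T. 1 / (1 + norm (t' - r)) powr \<alpha>) \<le> S"
        unfolding S_def
        using DC_interference_le_series[OF \<open>finite T\<close> \<open>t \<notin> T\<close> \<open>DC C D t r T\<close> assms(4,5,2,6)] .
      show "1 / (1 + C) powr \<alpha> \<le> 1 / (1 + norm (t - r)) powr \<alpha>"
        using \<open>DC C D t r T\<close> assms(2) by (intro inverse_one_plus_powr_antimono) (auto simp: DC_def)
    qed (simp add: sum_nonneg)
    then show "\<beta> \<le> SINR t r T P No (\<lambda>d. 1 / (1 + d) powr \<alpha>)"
      unfolding SINR_def by (simp add: sum_distrib_left)
  qed
qed

end
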